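(* Let $(S,\mathcal{A},\mu)$ be a complete, $\sigma$-finite measure space and $X$ an alternatively octahedral real Banach space. Then $L^1(\mu,X)$ and $L^\infty(\mu,X)$ are also alternatively octahedral.
   Context: A real Banach space $X$ is alternatively octahedral (AOH) if for every $n\in\mathbb{N}$, all $x_1,\dots,x_n\in S_X$ (the unit sphere) and every $\varepsilon>0$ there is $y\in S_X$ with $\max\{\|x_i+y\|,\|x_i-y\|\}\ge2-\varepsilon$ for all $i=1,\dots,n$. $L^1(\mu,X)$, $L^\infty(\mu,X)$ are the Lebesgue–Bochner spaces. *)

theory Defs
  imports "HOL-Analysis.Analysis" "HOL-Probability.Essential_Supremum" "HOL-Library.Function_Algebras"
begin

text \<open>Quotienting by the
  kernel of N does not change the property, since only N-values are involved.\<close>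
definition alt_octahedral :: "'v::{plus,minus} set \<Rightarrow> ('v \<Rightarrow> real) \<Rightarrow> bool" where
  "alt_octahedral V N \<longleftrightarrow>
     (\<forall>n::nat. n \<ge> 1 \<longrightarrow> (\<forall>x :: nat \<Rightarrow> 'v. (\<forall>i<n. x i \<in> V \<and> N (x i) = 1) \<longrightarrow>
        (\<forall>\<epsilon>>0. \<exists>y\<in>V. N y = 1 \<and>
           (\<forall>i<n. max (N (x i + y)) (N (x i - y)) \<ge> 2 - \<epsilon>))))"

definition strongly_measurable :: "'a measure \<Rightarrow> ('a \<Rightarrow> 'b::real_normed_vector) \<Rightarrow> bool" where
  "strongly_measurable M f \<longleftrightarrow>
     (\<exists>s :: nat \<Rightarrow> 'a \<Rightarrow> 'b. (\<forall>i. simple_function M (s i)) \<and>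
        (AE x in M. (\<lambda>i. s i x) \<longlonglongrightarrow> f x))"

text \<open>Lebesgue--Bochner space L^1(M,X), represented by functions (not classes).\<close>
definition L1_space :: "'a measure \<Rightarrow> ('a \<Rightarrow> 'b::real_normed_vector) set" where
  "L1_space M = {f. strongly_measurable M f \<and> (\<integral>\<^sup>+ x. ennreal (norm (f x)) \<partial>M) < \<infinity>}"

definition L1_norm :: "'a measure \<Rightarrow> ('a \<Rightarrow> 'b::real_normed_vector) \<Rightarrow> real" where
  "L1_norm M f = enn2real (\<integral>\<^sup>+ x. ennreal (norm (f x)) \<partial>M)"

definition Linf_space :: "'a measure \<Rightarrow> ('a \<Rightarrow> 'b::real_normed_vector) set" where
  "Linf_space M = {f. strongly_measurable M f \<and> esssup M (\<lambda>x. ereal (norm (f x))) < \<infinity>}"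

definition Linf_norm :: "'a measure \<Rightarrow> ('a \<Rightarrow> 'b::real_normed_vector) \<Rightarrow> real" where
  "Linf_norm M f = real_of_ereal (esssup M (\<lambda>x. ereal (norm (f x))))"

end

theory Submission
  imports Defs
begin

text \<open>A strongly measurable function is uniformly close to a single vector on some non-null set,
  and inside a set of positive finite measure this can be arranged simultaneously for finitely many
  functions \<open>f\<^sub>i\<close>, with vectors \<open>v\<^sub>i\<close>. Alternative octahedrality of \<open>X\<close>, applied to the
  directions \<open>u\<^sub>i\<close> of the \<open>v\<^sub>i\<close>, yields a unit vector \<open>z\<close>. In \<open>L\<^sup>\<infinity>\<close> the constant function
  \<open>z\<close> works: choosing the set inside \<open>{\<parallel>f\<^sub>i\<parallel> \<approx> 1}\<close> gives \<open>\<parallel>v\<^sub>i\<parallel> \<approx> 1\<close>, and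
  \<open>\<parallel>f\<^sub>i \<plusminus> z\<parallel>\<^sub>\<infinity> \<ge> \<parallel>v\<^sub>i \<plusminus> z\<parallel> \<approx> \<parallel>u\<^sub>i \<plusminus> z\<parallel>\<close>. In \<open>L\<^sup>1\<close> one takes the bump
  \<open>y = (z / \<mu>(A)) 1\<^sub>A\<close> on the common set \<open>A\<close>; moving mass \<open>1\<close> onto \<open>A\<close> changes the norm
  by about \<open>\<parallel>\<mu>(A) v\<^sub>i \<plusminus> z\<parallel> - \<parallel>\<mu>(A) v\<^sub>i\<parallel>\<close>, and since \<open>\<parallel>\<mu>(A) v\<^sub>i\<parallel> \<lesssim> \<parallel>f\<^sub>i\<parallel>\<^sub>1 = 1\<close> this is
  at least \<open>\<parallel>u\<^sub>i \<plusminus> z\<parallel> - 1\<close> up to small errors.\<close>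

lemma alt_octahedral_transfer:
  fixes N :: "'v::{plus,minus} \<Rightarrow> real"
  assumes X: "alt_octahedral (UNIV :: 'b::real_normed_vector set) norm"
    and approx: "\<And>n x \<eta>. n \<ge> (1::nat) \<Longrightarrow> \<forall>i<n. x i \<in> V \<and> N (x i) = 1 \<Longrightarrow> \<eta> > 0 \<Longrightarrow>
      \<exists>u T. (\<forall>i<n. norm (u i :: 'b) = 1) \<and>
        (\<forall>w. norm w = 1 \<longrightarrow> T w \<in> V \<and> N (T w) = 1 \<and>
          (\<forall>i<n. norm (u i + w) - \<eta> \<le> N (x i + T w) \<and> norm (u i - w) - \<eta> \<le> N (x i - T w)))"
  shows "alt_octahedral V N"
  unfolding alt_octahedral_def
proof (intro allI impI)
  fix n :: nat and x :: "nat \<Rightarrow> 'v" and \<epsilon> :: real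
  assume n: "n \<ge> 1" and x: "\<forall>i<n. x i \<in> V \<and> N (x i) = 1" and \<epsilon>: "\<epsilon> > 0"
  obtain u T where u: "\<forall>i<n. norm (u i :: 'b) = 1"
    and T: "\<And>w. norm w = 1 \<Longrightarrow> T w \<in> V \<and> N (T w) = 1 \<and>
      (\<forall>i<n. norm (u i + w) - \<epsilon>/2 \<le> N (x i + T w) \<and> norm (u i - w) - \<epsilon>/2 \<le> N (x i - T w))"
    using approx[OF n x, of "\<epsilon>/2"] \<epsilon> by auto
  have "\<forall>\<epsilon>>0. \<exists>z. norm z = 1 \<and> (\<forall>i<n. 2 - \<epsilon> \<le> max (norm (u i + z)) (norm (u i - z)))"
    using X[unfolded alt_octahedral_def, rule_format, OF n, of u] u by simp
  then obtain z where z: "norm z = 1" "\<forall>i<n. 2 - \<epsilon>/2 \<le> max (norm (u i + z)) (norm (u i - z))"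
    using \<epsilon> by (meson half_gt_zero)
  have "2 - \<epsilon> \<le> max (N (x i + T z)) (N (x i - T z))" if "i < n" for i
    using T[OF z(1)] z(2) that by (fastforce simp: le_max_iff_disj)
  then show "\<exists>y\<in>V. N y = 1 \<and> (\<forall>i<n. 2 - \<epsilon> \<le> max (N (x i + y)) (N (x i - y)))"
    using T[OF z(1)] by blast
qed

lemma norm_add_le_direction:
  fixes u v w :: "'b::real_normed_vector"
  assumes u: "norm u = 1" and v: "norm v *\<^sub>R u = v"
  shows "norm (u + w) \<le> norm (v + w) + \<bar>1 - norm v\<bar>"
proof -
  have "norm (u + w) = norm ((v + w) + (1 - norm v) *\<^sub>R u)"
    by (simp add: scaleR_diff_left v add.commute)
  also have "\<dots> \<le> norm (v + w) + \<bar>1 - norm v\<bar>"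
    by (rule order_trans[OF norm_triangle_ineq]) (simp add: u)
  finally show ?thesis .
qed

lemma norm_add_diff_norm_ge_direction:
  fixes u a w :: "'b::real_normed_vector"
  assumes u: "norm u = 1" and w: "norm w = 1" and a: "norm a *\<^sub>R u = a"
  shows "norm (u + w) - 1 - 2 * max 0 (norm a - 1) \<le> norm (a + w) - norm a"
proof (cases "norm a \<le> 1")
  case True
  then show ?thesis using norm_add_le_direction[OF u a, of w] by simp
next
  case False
  have "norm a *\<^sub>R (u + w) = (a + w) + (norm a - 1) *\<^sub>R w"
    by (simp add: scaleR_right_distrib scaleR_diff_left a)
  moreover have "norm (norm a *\<^sub>R (u + w)) = norm a * norm (u + w)"
    by simp
  ultimately have "norm a * norm (u + w) \<le> norm (a + w) + (norm a - 1)"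
    using norm_triangle_ineq[of "a + w" "(norm a - 1) *\<^sub>R w"] False w by simp
  moreover have "norm (u + w) \<le> norm a * norm (u + w)"
    using False by (simp add: mult_le_cancel_right1)
  ultimately show ?thesis using False by simp
qed

lemma ex_unit_direction:
  fixes a :: "'b::real_normed_vector"
  assumes "b \<noteq> (0 :: 'b)"
  obtains u where "norm u = 1" "norm a *\<^sub>R u = a"
proof (cases "a = 0")
  case True
  with assms show thesis by (intro that[of "sgn b"]) (simp_all add: norm_sgn)
next
  case False
  then show thesis by (intro that[of "sgn a"]) (simp_all add: norm_sgn sgn_div_norm)
qed

lemma strongly_measurable_simple_function:
  "simple_function M g \<Longrightarrow> strongly_measurable M g"
  unfolding strongly_measurable_def by (rule exI[of _ "\<lambda>i. g"]) auto

lemma strongly_measurable_add_simple_function: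
  assumes "strongly_measurable M f" "simple_function M g"
  shows "strongly_measurable M (\<lambda>x. f x + g x)"
proof -
  obtain s where s: "\<And>i. simple_function M (s i)" "AE x in M. (\<lambda>i. s i x) \<longlonglongrightarrow> f x"
    using assms(1) unfolding strongly_measurable_def by blast
  show ?thesis unfolding strongly_measurable_def
  proof (intro exI conjI allI)
    show "simple_function M (\<lambda>x. s i x + g x)" for i
      using simple_function_compose2[OF s(1) assms(2)] .
    show "AE x in M. (\<lambda>i. s i x + g x) \<longlonglongrightarrow> f x + g x"
      using s(2) by eventually_elim (auto intro: tendsto_intros)
  qed
qed

lemma borel_measurable_AE_eq_complete:
  assumes "complete_measure M" "g \<in> borel_measurable M" "AE x in M. f x = g x"
  shows "f \<in> borel_measurable M"
proof (rule measurableI)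
  fix A :: "'b set" assume "A \<in> sets borel"
  then have "g -` A \<inter> space M \<in> sets M" by (rule measurable_sets[OF assms(2)])
  moreover have "AE x in M. x \<in> g -` A \<inter> space M \<longleftrightarrow> x \<in> f -` A \<inter> space M"
    using assms(3) by eventually_elim auto
  ultimately show "f -` A \<inter> space M \<in> sets M"
    using complete_measure.in_sets_AE[OF assms(1)] by blast
qed auto

lemma borel_measurable_norm_strongly_measurable:
  assumes "complete_measure M" "strongly_measurable M f"
  shows "(\<lambda>x. norm (f x)) \<in> borel_measurable M"
proof -
  obtain s where s: "\<And>i. simple_function M (s i)" "AE x in M. (\<lambda>i. s i x) \<longlonglongrightarrow> f x"
    using assms(2) unfolding strongly_measurable_def by blast
  have "(\<lambda>x. norm (s i x)) \<in> borel_measurable M" for i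
    using borel_measurable_simple_function simple_function_compose1 s(1) by blast
  then have "(\<lambda>x. lim (\<lambda>i. norm (s i x))) \<in> borel_measurable M"
    by (rule borel_measurable_lim_metric)
  moreover have "AE x in M. norm (f x) = lim (\<lambda>i. norm (s i x))"
    using s(2) by eventually_elim (metis limI tendsto_norm)
  ultimately show ?thesis by (rule borel_measurable_AE_eq_complete[OF assms(1)])
qed

lemma AE_in_not_null_set_ex:
  assumes "A \<in> sets M" "A \<notin> null_sets M" "AE x in M. x \<in> A \<longrightarrow> P x"
  shows "\<exists>x\<in>A. P x"
proof (rule ccontr)
  assume "\<not> (\<exists>x\<in>A. P x)"
  with assms(3) have "AE x in M. x \<notin> A" by (auto elim: AE_mp)
  with assms(1,2) show False by (simp add: AE_iff_null_sets)
qed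

lemma simple_function_level_set_not_null:
  assumes g: "simple_function M g" and C: "C \<in> sets M" "C \<notin> null_sets M"
  obtains v where "C \<inter> g -` {v} \<in> sets M" "C \<inter> g -` {v} \<notin> null_sets M"
proof -
  have level: "C \<inter> g -` {v} = C \<inter> (g -` {v} \<inter> space M)" for v
    using sets.sets_into_space[OF C(1)] by blast
  have "(\<Union>v\<in>g ` space M. C \<inter> g -` {v}) = C"
    using sets.sets_into_space[OF C(1)] by blast
  then have "\<exists>v. C \<inter> g -` {v} \<notin> null_sets M"
    using C(2) null_sets_UN'[OF countable_finite[OF simple_functionD(1)[OF g]], of "\<lambda>v. C \<inter> g -` {v}" M]
    by metis
  then show thesis
    using that level sets.Int[OF C(1) simple_functionD(2)[OF g]] by metis
qed

lemma AE_Cauchy_uniform_on_not_null_set: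
  fixes s :: "nat \<Rightarrow> 'a \<Rightarrow> 'b::real_normed_vector"
  assumes s: "\<And>i. simple_function M (s i)" and Cauchy: "AE x in M. Cauchy (\<lambda>i. s i x)"
    and B: "B \<in> sets M" "B \<notin> null_sets M" and \<delta>: "\<delta> > 0"
  obtains k where "{x\<in>B. \<forall>m\<ge>k. norm (s m x - s k x) \<le> \<delta>} \<in> sets M"
    "{x\<in>B. \<forall>m\<ge>k. norm (s m x - s k x) \<le> \<delta>} \<notin> null_sets M"
proof -
  define C where "C k = {x\<in>B. \<forall>m\<ge>k. norm (s m x - s k x) \<le> \<delta>}" for k
  have C: "C k \<in> sets M" for k
  proof -
    have "{x\<in>space M. k \<le> m \<longrightarrow> norm (s m x - s k x) \<le> \<delta>} \<in> sets M" for m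
      using borel_measurable_simple_function[OF simple_function_compose2[OF s[of m] s[of k], of "\<lambda>a b. norm (a - b)"]]
      by measurable
    then have "B \<inter> (\<Inter>m. {x\<in>space M. k \<le> m \<longrightarrow> norm (s m x - s k x) \<le> \<delta>}) \<in> sets M"
      using B(1) by blast
    moreover have "B \<inter> (\<Inter>m. {x\<in>space M. k \<le> m \<longrightarrow> norm (s m x - s k x) \<le> \<delta>}) = C k"
      unfolding C_def using sets.sets_into_space[OF B(1)] by blast
    ultimately show ?thesis by simp
  qed
  have "AE x in M. x \<in> B \<longrightarrow> x \<in> (\<Union>k. C k)"
    using Cauchy
  proof (eventually_elim, intro impI)
    case (elim x)
    then obtain k where "\<forall>m\<ge>k. \<forall>n\<ge>k. norm (s m x - s n x) < \<delta>"
      using CauchyD \<delta> by blast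
    then have "x \<in> C k" if "x \<in> B" unfolding C_def using that by (auto intro: less_imp_le)
    then show "x \<in> B \<Longrightarrow> x \<in> (\<Union>k. C k)" by blast
  qed
  moreover have "(\<Union>k. C k) \<in> sets M" using C by blast
  ultimately have "emeasure M B \<le> emeasure M (\<Union>k. C k)"
    by (rule emeasure_mono_AE)
  then have "(\<Union>k. C k) \<notin> null_sets M" using B by (auto simp: null_sets_def)
  then obtain k where "C k \<notin> null_sets M" by blast
  with C that show thesis unfolding C_def by blast
qed

lemma strongly_measurable_near_constant:
  assumes f: "strongly_measurable M f" and B: "B \<in> sets M" "B \<notin> null_sets M" and \<delta>: "\<delta> > 0"
  obtains A v where "A \<in> sets M" "A \<subseteq> B" "A \<notin> null_sets M"
    "AE x in M. x \<in> A \<longrightarrow> norm (f x - v) \<le> \<delta>"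
proof -
  obtain s where s: "\<And>i. simple_function M (s i)" "AE x in M. (\<lambda>i. s i x) \<longlonglongrightarrow> f x"
    using f unfolding strongly_measurable_def by blast
  have "AE x in M. Cauchy (\<lambda>i. s i x)"
    using s(2) by eventually_elim (rule LIMSEQ_imp_Cauchy)
  then obtain k where C: "{x\<in>B. \<forall>m\<ge>k. norm (s m x - s k x) \<le> \<delta>} \<in> sets M"
    "{x\<in>B. \<forall>m\<ge>k. norm (s m x - s k x) \<le> \<delta>} \<notin> null_sets M"
    by (rule AE_Cauchy_uniform_on_not_null_set[where s=s, OF s(1) _ B \<delta>])
  then obtain v where A: "{x\<in>B. \<forall>m\<ge>k. norm (s m x - s k x) \<le> \<delta>} \<inter> s k -` {v} \<in> sets M"
    "{x\<in>B. \<forall>m\<ge>k. norm (s m x - s k x) \<le> \<delta>} \<inter> s k -` {v} \<notin> null_sets M"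
    by (rule simple_function_level_set_not_null[OF s(1)])
  have "AE x in M. x \<in> {x\<in>B. \<forall>m\<ge>k. norm (s m x - s k x) \<le> \<delta>} \<inter> s k -` {v} \<longrightarrow>
      norm (f x - v) \<le> \<delta>"
    using s(2)
  proof eventually_elim
    case (elim x)
    show ?case
    proof
      assume "x \<in> {x\<in>B. \<forall>m\<ge>k. norm (s m x - s k x) \<le> \<delta>} \<inter> s k -` {v}"
      then have "\<forall>m\<ge>k. norm (s m x - v) \<le> \<delta>" by auto
      moreover have "(\<lambda>m. norm (s m x - v)) \<longlonglongrightarrow> norm (f x - v)"
        using elim by (intro tendsto_intros)
      ultimately show "norm (f x - v) \<le> \<delta>" using LIMSEQ_le_const2 by blast
    qed
  qed
  with A that show thesis by blast
qed

lemma strongly_measurable_family_near_constant: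
  fixes f :: "nat \<Rightarrow> 'a \<Rightarrow> 'b::real_normed_vector"
  assumes "\<forall>i<n. strongly_measurable M (f i)" "B \<in> sets M" "B \<notin> null_sets M" "\<delta> > 0"
  shows "\<exists>A\<in>sets M. A \<subseteq> B \<and> A \<notin> null_sets M \<and>
     (\<exists>v. \<forall>i<n. AE x in M. x \<in> A \<longrightarrow> norm (f i x - v i) \<le> \<delta>)"
  using assms(1)
proof (induction n)
  case 0
  then show ?case using assms(2,3) by blast
next
  case (Suc n)
  then obtain A v where A: "A \<in> sets M" "A \<subseteq> B" "A \<notin> null_sets M"
    "\<forall>i<n. AE x in M. x \<in> A \<longrightarrow> norm (f i x - v i) \<le> \<delta>" by auto
  obtain A' w where A': "A' \<in> sets M" "A' \<subseteq> A" "A' \<notin> null_sets M"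
    "AE x in M. x \<in> A' \<longrightarrow> norm (f n x - w) \<le> \<delta>"
    using strongly_measurable_near_constant[OF _ A(1,3) assms(4), of "f n"] Suc.prems by auto
  have "\<forall>i<Suc n. AE x in M. x \<in> A' \<longrightarrow> norm (f i x - (v(n := w)) i) \<le> \<delta>"
  proof (intro allI impI)
    fix i assume "i < Suc n"
    then consider "i = n" | "i < n" by linarith
    then show "AE x in M. x \<in> A' \<longrightarrow> norm (f i x - (v(n := w)) i) \<le> \<delta>"
    proof cases
      case 2
      with A(4) have "AE x in M. x \<in> A \<longrightarrow> norm (f i x - v i) \<le> \<delta>" by blast
      then show ?thesis by eventually_elim (use 2 A'(2) in auto)
    qed (use A'(4) in simp)
  qed
  then show ?case using A' A(2) by blast
qed

lemma sigma_finite_ex_finite_not_null_set: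
  assumes "sigma_finite_measure M" "space M \<notin> null_sets M"
  obtains B where "B \<in> sets M" "B \<notin> null_sets M" "emeasure M B < \<infinity>"
proof -
  obtain C :: "nat \<Rightarrow> 'a set" where C: "range C \<subseteq> sets M" "(\<Union>i. C i) = space M"
    "\<And>i. emeasure M (C i) \<noteq> \<infinity>"
    by (rule sigma_finite_measure.sigma_finite[OF assms(1)]) auto
  have "(\<Union>i. C i) \<notin> null_sets M" using assms(2) C(2) by simp
  then obtain k where "C k \<notin> null_sets M" by blast
  then show thesis using that[of "C k"] C(1,3) by (auto simp: less_top)
qed

lemma measure_pos_if_not_null:
  assumes "A \<in> sets M" "A \<notin> null_sets M" "emeasure M A < \<infinity>"
  shows "0 < measure M A"
  using assms emeasure_eq_ennreal_measure[of M A]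
  by (simp add: zero_less_measure_iff null_sets_def less_top)

lemma sigma_finite_family_near_constant:
  fixes f :: "nat \<Rightarrow> 'a \<Rightarrow> 'b::real_normed_vector"
  assumes sf: "sigma_finite_measure M" and "space M \<notin> null_sets M"
    and f: "\<forall>i<n. strongly_measurable M (f i)" and \<eta>: "\<eta> > 0"
  obtains A v \<delta> where "A \<in> sets M" "emeasure M A < \<infinity>" "0 < measure M A"
    "0 \<le> \<delta>" "\<delta> * measure M A \<le> \<eta>" "\<forall>i<n. AE x in M. x \<in> A \<longrightarrow> norm (f i x - v i) \<le> \<delta>"
proof -
  obtain B where B: "B \<in> sets M" "B \<notin> null_sets M" "emeasure M B < \<infinity>"
    by (rule sigma_finite_ex_finite_not_null_set[OF sf \<open>space M \<notin> null_sets M\<close>])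
  \<comment> \<open>The tolerance must be fixed before \<open>A\<close> is found, so it is scaled by the finite \<open>B \<supseteq> A\<close>.\<close>
  have "0 < measure M B" by (rule measure_pos_if_not_null[OF B])
  then have \<delta>: "\<eta> / measure M B > 0" using \<eta> by simp
  from strongly_measurable_family_near_constant[OF f B(1,2) this]
  obtain A v where A: "A \<in> sets M" "A \<subseteq> B" "A \<notin> null_sets M"
    and near: "\<forall>i<n. AE x in M. x \<in> A \<longrightarrow> norm (f i x - v i) \<le> \<eta> / measure M B"
    by blast
  have A_fin: "emeasure M A < \<infinity>"
    using emeasure_mono[OF A(2) B(1)] B(3) by simp
  have "measure M A \<le> measure M B"
    using measure_mono_fmeasurable[OF A(2) A(1)] B by (auto simp: fmeasurable_def)
  then have "\<eta> / measure M B * measure M A \<le> \<eta>"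
    using \<open>0 < measure M B\<close> \<eta> by (simp add: field_simps)
  from that[OF A(1) A_fin measure_pos_if_not_null[OF A(1,3) A_fin] less_imp_le[OF \<delta>] this near]
  show thesis .
qed

lemma esssup_norm_eq_1_if_Linf_norm_eq_1:
  "Linf_norm M f = 1 \<Longrightarrow> esssup M (\<lambda>x. ereal (norm (f x))) = 1"
  unfolding Linf_norm_def by (cases "esssup M (\<lambda>x. ereal (norm (f x)))") (auto simp: one_ereal_def)

lemma Linf_space_const:
  assumes "space M \<notin> null_sets M"
  shows "(\<lambda>x. w) \<in> Linf_space M" "Linf_norm M (\<lambda>x. w) = norm w"
proof -
  have "esssup M (\<lambda>x. ereal (norm w)) = ereal (norm w)"
    using assms by (intro esssup_const) auto
  then show "(\<lambda>x. w) \<in> Linf_space M" "Linf_norm M (\<lambda>x. w) = norm w"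
    unfolding Linf_space_def Linf_norm_def
    by (auto intro: strongly_measurable_simple_function)
qed

lemma Linf_norm_ge_on_not_null_set:
  assumes cm: "complete_measure M" and g: "strongly_measurable M g"
    and A: "A \<in> sets M" "A \<notin> null_sets M"
    and lower: "AE x in M. x \<in> A \<longrightarrow> c \<le> norm (g x)"
    and upper: "AE x in M. norm (g x) \<le> K"
  shows "c \<le> Linf_norm M g"
proof -
  have meas: "(\<lambda>x. ereal (norm (g x))) \<in> borel_measurable M"
    using borel_measurable_norm_strongly_measurable[OF cm g] by simp
  have "esssup M (\<lambda>x. ereal (norm (g x))) \<le> ereal K"
    using upper by (intro esssup_I[OF meas]) auto
  moreover have "ereal c \<le> esssup M (\<lambda>x. ereal (norm (g x)))"
  proof (rule ccontr)
    assume less: "\<not> ereal c \<le> esssup M (\<lambda>x. ereal (norm (g x)))"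
    have "AE x in M. x \<in> A \<longrightarrow> False"
      using esssup_AE[of "\<lambda>x. ereal (norm (g x))" M] lower
    proof eventually_elim
      case (elim x)
      show ?case
      proof
        assume "x \<in> A"
        with elim have "ereal c \<le> ereal (norm (g x))" by simp
        also have "\<dots> \<le> esssup M (\<lambda>x. ereal (norm (g x)))" using elim by blast
        finally show False using less by blast
      qed
    qed
    from AE_in_not_null_set_ex[OF A this] show False by blast
  qed
  ultimately show ?thesis unfolding Linf_norm_def
    by (cases "esssup M (\<lambda>x. ereal (norm (g x)))") auto
qed

lemma Linf_norm_add_const_ge:
  assumes cm: "complete_measure M" and f: "f \<in> Linf_space M" "Linf_norm M f = 1"
    and A: "A \<in> sets M" "A \<notin> null_sets M"
    and near: "AE x in M. x \<in> A \<longrightarrow> norm (f x - v) \<le> \<delta>"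
  shows "norm (v + w) - \<delta> \<le> Linf_norm M (\<lambda>x. f x + w)"
proof (rule Linf_norm_ge_on_not_null_set[OF cm _ A])
  show "strongly_measurable M (\<lambda>x. f x + w)"
    using f(1) strongly_measurable_add_simple_function[of M f "\<lambda>x. w"]
    by (simp add: Linf_space_def)
  show "AE x in M. x \<in> A \<longrightarrow> norm (v + w) - \<delta> \<le> norm (f x + w)"
    using near
  proof eventually_elim
    case (elim x)
    have "norm (v + w) \<le> norm (f x + w) + norm (f x - v)"
      using norm_triangle_ineq[of "f x + w" "v - f x"] by (simp add: norm_minus_commute add.commute)
    then show ?case using elim by auto
  qed
  have esssup: "esssup M (\<lambda>x. ereal (norm (f x))) = 1"
    by (rule esssup_norm_eq_1_if_Linf_norm_eq_1[OF f(2)])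
  show "AE x in M. norm (f x + w) \<le> 1 + norm w"
    using esssup_AE[of "\<lambda>x. ereal (norm (f x))" M]
  proof eventually_elim
    case (elim x)
    then have "norm (f x) \<le> 1" using esssup by (simp add: one_ereal_def)
    then show ?case using norm_triangle_ineq[of "f x" w] by linarith
  qed
qed

lemma Linf_unit_near_vector:
  assumes cm: "complete_measure M" and f: "f \<in> Linf_space M" "Linf_norm M f = 1"
    and \<delta>: "\<delta> > 0"
  obtains A v where "A \<in> sets M" "A \<notin> null_sets M"
    "AE x in M. x \<in> A \<longrightarrow> norm (f x - v) \<le> \<delta>" "\<bar>1 - norm v\<bar> \<le> 2 * \<delta>"
proof -
  have meas: "(\<lambda>x. norm (f x)) \<in> borel_measurable M"
    using borel_measurable_norm_strongly_measurable[OF cm] f(1) unfolding Linf_space_def by blast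
  have esssup: "esssup M (\<lambda>x. ereal (norm (f x))) = 1"
    by (rule esssup_norm_eq_1_if_Linf_norm_eq_1[OF f(2)])
  define B where "B = {x\<in>space M. 1 - \<delta> < norm (f x)}"
  have B: "B \<in> sets M" unfolding B_def using meas by measurable
  have "B \<notin> null_sets M"
  proof
    assume "B \<in> null_sets M"
    then have "AE x in M. ereal (norm (f x)) \<le> ereal (1 - \<delta>)"
      by (rule AE_I') (auto simp: B_def)
    then have "esssup M (\<lambda>x. ereal (norm (f x))) \<le> ereal (1 - \<delta>)"
      using meas by (intro esssup_I) auto
    with esssup \<delta> show False by (simp add: one_ereal_def)
  qed
  then obtain A v where A: "A \<in> sets M" "A \<subseteq> B" "A \<notin> null_sets M"
    and near: "AE x in M. x \<in> A \<longrightarrow> norm (f x - v) \<le> \<delta>"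
    using strongly_measurable_near_constant[OF _ B _ \<delta>] f(1) by (auto simp: Linf_space_def)
  have "AE x in M. x \<in> A \<longrightarrow> norm (f x - v) \<le> \<delta> \<and> norm (f x) \<le> 1"
    using near esssup_AE[of "\<lambda>x. ereal (norm (f x))" M]
    by eventually_elim (use esssup in \<open>simp add: one_ereal_def\<close>)
  from AE_in_not_null_set_ex[OF A(1,3) this]
  obtain x where x: "x \<in> A" "norm (f x - v) \<le> \<delta>" "norm (f x) \<le> 1" by blast
  have "1 - \<delta> < norm (f x)" using x(1) A(2) unfolding B_def by auto
  moreover have "norm (f x) \<le> norm v + norm (f x - v)" "norm v \<le> norm (f x) + norm (f x - v)"
    using norm_triangle_sub[of "f x" v] norm_triangle_sub[of v "f x"] by (simp_all add: norm_minus_commute)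
  ultimately have "\<bar>1 - norm v\<bar> \<le> 2 * \<delta>" using x by linarith
  with A near that show thesis by blast
qed

lemma Linf_unit_norm_add_const_ge:
  assumes cm: "complete_measure M" and f: "f \<in> Linf_space M" "Linf_norm M f = 1"
    and \<delta>: "0 < \<delta>" "\<delta> \<le> 1/4"
  obtains u where "norm u = 1" "\<And>w. norm (u + w) - 3 * \<delta> \<le> Linf_norm M (\<lambda>x. f x + w)"
proof -
  obtain A v where A: "A \<in> sets M" "A \<notin> null_sets M"
    and near: "AE x in M. x \<in> A \<longrightarrow> norm (f x - v) \<le> \<delta>" and v: "\<bar>1 - norm v\<bar> \<le> 2 * \<delta>"
    using Linf_unit_near_vector[OF cm f \<delta>(1)] by blast
  have "v \<noteq> 0" using v \<delta>(2) by auto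
  then have u: "norm (sgn v) = 1" "norm v *\<^sub>R sgn v = v" by (simp_all add: norm_sgn sgn_div_norm)
  have "norm (sgn v + w) - 3 * \<delta> \<le> Linf_norm M (\<lambda>x. f x + w)" for w
    using norm_add_le_direction[OF u, of w] Linf_norm_add_const_ge[OF cm f A near, of w] v
    by linarith
  with u(1) that show thesis by blast
qed

lemma space_not_null_if_Linf_norm_eq_1:
  assumes "Linf_norm M f = 1"
  shows "space M \<notin> null_sets M"
proof
  assume "space M \<in> null_sets M"
  then have "esssup M (\<lambda>x. ereal (norm (f x))) \<in> {- \<infinity>, \<infinity>}"
    using esssup_zero_space[of M] esssup_non_measurable[of "\<lambda>x. ereal (norm (f x))" M]
    by (cases "(\<lambda>x. ereal (norm (f x))) \<in> borel_measurable M") (auto simp: top_ereal_def)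
  with assms show False by (auto simp: Linf_norm_def)
qed

lemma Linf_alt_octahedral:
  assumes cm: "complete_measure M" and X: "alt_octahedral (UNIV :: 'b::real_normed_vector set) norm"
  shows "alt_octahedral (Linf_space M :: ('a \<Rightarrow> 'b) set) (Linf_norm M)"
proof (rule alt_octahedral_transfer[OF X])
  fix n :: nat and f :: "nat \<Rightarrow> 'a \<Rightarrow> 'b" and \<eta> :: real
  assume n: "n \<ge> 1" and f: "\<forall>i<n. f i \<in> Linf_space M \<and> Linf_norm M (f i) = 1" and \<eta>: "\<eta> > 0"
  define \<delta> where "\<delta> = min (\<eta>/3) (1/4)"
  have \<delta>: "0 < \<delta>" "\<delta> \<le> 1/4" "3 * \<delta> \<le> \<eta>" using \<eta> unfolding \<delta>_def by auto
  have "\<exists>u. norm u = 1 \<and> (\<forall>w. norm (u + w) - \<eta> \<le> Linf_norm M (\<lambda>x. f i x + w))"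
    if "i < n" for i
  proof -
    from f that have "f i \<in> Linf_space M" "Linf_norm M (f i) = 1" by auto
    from Linf_unit_norm_add_const_ge[OF cm this \<delta>(1,2)] show ?thesis
      using \<delta>(3) by (smt (verit))
  qed
  then obtain u where u: "\<And>i. i < n \<Longrightarrow> norm (u i :: 'b) = 1"
    and bound: "\<And>i w. i < n \<Longrightarrow> norm (u i + w) - \<eta> \<le> Linf_norm M (\<lambda>x. f i x + w)"
    by metis
  have "space M \<notin> null_sets M"
    using space_not_null_if_Linf_norm_eq_1[of M "f 0"] f n by simp
  note const = Linf_space_const[OF this]
  show "\<exists>u T. (\<forall>i<n. norm (u i :: 'b) = 1) \<and> (\<forall>w. norm w = 1 \<longrightarrow> T w \<in> Linf_space M \<and>
      Linf_norm M (T w) = 1 \<and> (\<forall>i<n. norm (u i + w) - \<eta> \<le> Linf_norm M (f i + T w) \<and>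
        norm (u i - w) - \<eta> \<le> Linf_norm M (f i - T w)))"
  proof (intro exI[of _ u] exI[of _ "\<lambda>w x. w"] conjI allI impI)
    fix i w assume "i < n"
    show "norm (u i + w) - \<eta> \<le> Linf_norm M (f i + (\<lambda>x. w))"
      using bound[OF \<open>i < n\<close>] by (simp add: plus_fun_def)
    show "norm (u i - w) - \<eta> \<le> Linf_norm M (f i - (\<lambda>x. w))"
      using bound[OF \<open>i < n\<close>, of "- w"] by (simp add: fun_diff_def)
  next
    show "(\<lambda>x. w) \<in> Linf_space M" "Linf_norm M (\<lambda>x. w) = 1" if "norm w = 1" for w :: 'b
      using that by (simp_all add: const)
  qed (use u in blast)
qed

lemma L1_norm_eq_integral:
  assumes "integrable M (\<lambda>x. norm (g x))"
  shows "L1_norm M g = (\<integral>x. norm (g x) \<partial>M)"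
  unfolding L1_norm_def using nn_integral_eq_integral[OF assms] by simp

lemma L1_spaceI:
  assumes "strongly_measurable M g" "integrable M (\<lambda>x. norm (g x))"
  shows "g \<in> L1_space M"
  unfolding L1_space_def using assms nn_integral_eq_integral[OF assms(2)] by simp

lemma integrable_norm_if_L1_space:
  assumes "complete_measure M" "g \<in> L1_space M"
  shows "integrable M (\<lambda>x. norm (g x))"
  using assms borel_measurable_norm_strongly_measurable[OF assms(1)]
  by (intro integrableI_bounded) (auto simp: L1_space_def)

lemma space_not_null_if_L1_norm_eq_1:
  assumes "L1_norm M f = 1"
  shows "space M \<notin> null_sets M"
proof
  assume "space M \<in> null_sets M"
  then have "(\<integral>\<^sup>+ x. ennreal (norm (f x)) \<partial>M) = (\<integral>\<^sup>+ x. 0 \<partial>M)"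
    by (intro nn_integral_cong_AE AE_I') auto
  with assms show False by (simp add: L1_norm_def)
qed

lemma L1_bump:
  assumes A: "A \<in> sets M" "emeasure M A < \<infinity>" "measure M A > 0"
  shows "(\<lambda>x. indicator A x *\<^sub>R (w /\<^sub>R measure M A)) \<in> L1_space M"
    "L1_norm M (\<lambda>x. indicator A x *\<^sub>R (w /\<^sub>R measure M A)) = norm w"
proof -
  have norm: "norm (indicator A x *\<^sub>R (w /\<^sub>R measure M A)) = norm w / measure M A * indicator A x" for x
    using A(3) by (simp add: indicator_def divide_inverse_commute)
  have int: "integrable M (\<lambda>x. norm (indicator A x *\<^sub>R (w /\<^sub>R measure M A)))"
    unfolding norm using A(1,2) by simp
  show "(\<lambda>x. indicator A x *\<^sub>R (w /\<^sub>R measure M A)) \<in> L1_space M"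
    by (intro L1_spaceI int strongly_measurable_simple_function simple_function_compose1[
        OF simple_function_indicator[OF A(1)]])
  show "L1_norm M (\<lambda>x. indicator A x *\<^sub>R (w /\<^sub>R measure M A)) = norm w"
    unfolding L1_norm_eq_integral[OF int] norm using A by simp
qed

lemma integral_norm_ge_near_constant:
  assumes f: "integrable M (\<lambda>x. norm (f x))" and A: "A \<in> sets M" "emeasure M A < \<infinity>"
    and near: "AE x in M. x \<in> A \<longrightarrow> norm (f x - v) \<le> \<delta>"
  shows "measure M A * (norm v - \<delta>) \<le> (\<integral>x. norm (f x) \<partial>M)"
proof -
  have ae: "AE x in M. (norm v - \<delta>) * indicator A x \<le> norm (f x)"
    using near
  proof eventually_elim
    case (elim x)
    have "norm v \<le> norm (f x) + norm (f x - v)"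
      using norm_triangle_sub[of v "f x"] by (simp add: norm_minus_commute)
    with elim show ?case by (auto simp: indicator_def)
  qed
  have "(\<integral>x. (norm v - \<delta>) * indicator A x \<partial>M) \<le> (\<integral>x. norm (f x) \<partial>M)"
    by (rule integral_mono_AE[OF _ f ae]) (use A in simp)
  then show ?thesis using A by (simp add: mult.commute)
qed

lemma L1_norm_add_bump_ge_near_constant:
  assumes cm: "complete_measure M" and f: "strongly_measurable M f" "integrable M (\<lambda>x. norm (f x))"
    and A: "A \<in> sets M" "emeasure M A < \<infinity>" and m: "m = measure M A" "m > 0"
    and near: "AE x in M. x \<in> A \<longrightarrow> norm (f x - v) \<le> \<delta>"
  shows "(\<integral>x. norm (f x) \<partial>M) + norm (m *\<^sub>R v + w) - norm (m *\<^sub>R v) - 2 * \<delta> * m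
           \<le> L1_norm M (\<lambda>x. f x + indicator A x *\<^sub>R (w /\<^sub>R m))"
proof -
  let ?g = "\<lambda>x. f x + indicator A x *\<^sub>R (w /\<^sub>R m)"
  define c where "c = norm (v + w /\<^sub>R m) - norm v - 2 * \<delta>"
  have "strongly_measurable M ?g"
    by (intro strongly_measurable_add_simple_function[OF f(1)]
        simple_function_compose1[OF simple_function_indicator[OF A(1)]])
  then have meas: "(\<lambda>x. norm (?g x)) \<in> borel_measurable M"
    by (rule borel_measurable_norm_strongly_measurable[OF cm])
  have int_A: "integrable M (\<lambda>x. indicator A x :: real)" using A by simp
  have int_g: "integrable M (\<lambda>x. norm (?g x))"
  proof (rule Bochner_Integration.integrable_bound[OF _ meas])
    show "integrable M (\<lambda>x. norm (f x) + indicator A x * norm (w /\<^sub>R m))"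
      using f(2) int_A by simp
    show "AE x in M. norm (norm (?g x)) \<le> norm (norm (f x) + indicator A x * norm (w /\<^sub>R m))"
      by (intro AE_I2) (auto simp: indicator_def intro: norm_triangle_le)
  qed
  have ae: "AE x in M. norm (f x) + c * indicator A x \<le> norm (?g x)"
    using near
  proof eventually_elim
    case (elim x)
    show ?case
    proof (cases "x \<in> A")
      case True
      have "norm (v + w /\<^sub>R m) \<le> norm (f x + w /\<^sub>R m) + norm (f x - v)"
        using norm_triangle_sub[of "v + w /\<^sub>R m" "f x + w /\<^sub>R m"] by (simp add: norm_minus_commute)
      moreover have "norm (f x) \<le> norm v + norm (f x - v)" by (rule norm_triangle_sub)
      ultimately show ?thesis using True elim unfolding c_def by simp
    qed simp
  qed
  have "(\<integral>x. norm (f x) + c * indicator A x \<partial>M) \<le> (\<integral>x. norm (?g x) \<partial>M)"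
    by (rule integral_mono_AE[OF _ int_g ae]) (use f(2) int_A in simp)
  moreover have "(\<integral>x. norm (f x) + c * indicator A x \<partial>M) = (\<integral>x. norm (f x) \<partial>M) + c * m"
    using f(2) int_A A(1) m(1) by simp
  moreover have "norm (m *\<^sub>R v + w) = m * norm (v + w /\<^sub>R m)"
    using m(2) norm_scaleR[of m "v + w /\<^sub>R m"] by (simp add: scaleR_right_distrib)
  ultimately show ?thesis
    using L1_norm_eq_integral[OF int_g] m(2) unfolding c_def by (simp add: algebra_simps)
qed

lemma L1_unit_norm_add_bump_ge:
  fixes f :: "'a \<Rightarrow> 'b::real_normed_vector"
  assumes cm: "complete_measure M" and f: "f \<in> L1_space M" "L1_norm M f = 1"
    and A: "A \<in> sets M" "emeasure M A < \<infinity>" and m: "m = measure M A" "m > 0"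
    and near: "AE x in M. x \<in> A \<longrightarrow> norm (f x - v) \<le> \<delta>" and \<delta>: "\<delta> \<ge> 0"
    and u: "norm u = 1" "norm (m *\<^sub>R v) *\<^sub>R u = m *\<^sub>R v" and w: "norm w = 1"
  shows "norm (u + w) - 4 * \<delta> * m \<le> L1_norm M (\<lambda>x. f x + indicator A x *\<^sub>R (w /\<^sub>R m))"
proof -
  have int: "integrable M (\<lambda>x. norm (f x))" by (rule integrable_norm_if_L1_space[OF cm f(1)])
  have one: "(\<integral>x. norm (f x) \<partial>M) = 1" using f(2) L1_norm_eq_integral[OF int] by simp
  have "norm (m *\<^sub>R v) \<le> 1 + \<delta> * m"
    using integral_norm_ge_near_constant[OF int A near] m one by (simp add: algebra_simps)
  then have "max 0 (norm (m *\<^sub>R v) - 1) \<le> \<delta> * m"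
    using \<delta> m(2) by simp
  then have "norm (u + w) - 1 - 2 * (\<delta> * m) \<le> norm (m *\<^sub>R v + w) - norm (m *\<^sub>R v)"
    using norm_add_diff_norm_ge_direction[OF u(1) w u(2)] by argo
  moreover have "1 + norm (m *\<^sub>R v + w) - norm (m *\<^sub>R v) - 2 * \<delta> * m
      \<le> L1_norm M (\<lambda>x. f x + indicator A x *\<^sub>R (w /\<^sub>R m))"
    using L1_norm_add_bump_ge_near_constant[OF cm _ int A m near, of w] f(1) one
    by (simp add: L1_space_def)
  ultimately show ?thesis by simp
qed

lemma L1_alt_octahedral:
  assumes cm: "complete_measure M" and sf: "sigma_finite_measure M"
    and X: "alt_octahedral (UNIV :: 'b::real_normed_vector set) norm"
  shows "alt_octahedral (L1_space M :: ('a \<Rightarrow> 'b) set) (L1_norm M)"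
proof (rule alt_octahedral_transfer[OF X])
  fix n :: nat and f :: "nat \<Rightarrow> 'a \<Rightarrow> 'b" and \<eta> :: real
  assume n: "n \<ge> 1" and f: "\<forall>i<n. f i \<in> L1_space M \<and> L1_norm M (f i) = 1" and \<eta>: "\<eta> > 0"
  have f\<^sub>0: "L1_norm M (f 0) = 1" using f n by simp
  then have "f 0 \<noteq> (\<lambda>x. 0)" by (auto simp: L1_norm_def)
  then obtain b where b: "f 0 b \<noteq> 0" by blast
  have "\<forall>i<n. strongly_measurable M (f i)" using f by (simp add: L1_space_def)
  moreover have "\<eta> / 4 > 0" using \<eta> by simp
  ultimately obtain A v \<delta> where A: "A \<in> sets M" "emeasure M A < \<infinity>" "0 < measure M A"
    and \<delta>: "0 \<le> \<delta>" "\<delta> * measure M A \<le> \<eta> / 4"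
    and near: "\<forall>i<n. AE x in M. x \<in> A \<longrightarrow> norm (f i x - v i) \<le> \<delta>"
    by (rule sigma_finite_family_near_constant[OF sf space_not_null_if_L1_norm_eq_1[OF f\<^sub>0]])
  define m where "m = measure M A"
  have "\<exists>u. norm u = 1 \<and> norm (m *\<^sub>R v i) *\<^sub>R u = m *\<^sub>R v i" for i
    by (rule ex_unit_direction[OF b]) blast
  then obtain u where u: "\<And>i. norm (u i) = 1" "\<And>i. norm (m *\<^sub>R v i) *\<^sub>R u i = m *\<^sub>R v i"
    by metis
  have bound: "norm (u i + w) - \<eta> \<le> L1_norm M (\<lambda>x. f i x + indicator A x *\<^sub>R (w /\<^sub>R m))"
    if i: "i < n" and w: "norm w = 1" for i w
  proof -
    from f i have "f i \<in> L1_space M" "L1_norm M (f i) = 1" by auto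
    from L1_unit_norm_add_bump_ge[OF cm this A(1,2) m_def A(3)[folded m_def] near[rule_format, OF i]
        \<delta>(1) u(1,2) w]
    show ?thesis using \<delta>(2) unfolding m_def by linarith
  qed
  show "\<exists>u T. (\<forall>i<n. norm (u i :: 'b) = 1) \<and> (\<forall>w. norm w = 1 \<longrightarrow> T w \<in> L1_space M \<and>
      L1_norm M (T w) = 1 \<and> (\<forall>i<n. norm (u i + w) - \<eta> \<le> L1_norm M (f i + T w) \<and>
        norm (u i - w) - \<eta> \<le> L1_norm M (f i - T w)))"
  proof (intro exI[of _ u] exI[of _ "\<lambda>w x. indicator A x *\<^sub>R (w /\<^sub>R m)"] conjI allI impI)
    fix i and w :: 'b assume "i < n" "norm w = 1"
    show "norm (u i + w) - \<eta> \<le> L1_norm M (f i + (\<lambda>x. indicator A x *\<^sub>R (w /\<^sub>R m)))"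
      using bound[OF \<open>i < n\<close> \<open>norm w = 1\<close>] by (simp add: plus_fun_def)
    show "norm (u i - w) - \<eta> \<le> L1_norm M (f i - (\<lambda>x. indicator A x *\<^sub>R (w /\<^sub>R m)))"
      using bound[OF \<open>i < n\<close>, of "- w"] \<open>norm w = 1\<close> by (simp add: fun_diff_def)
  next
    show "(\<lambda>x. indicator A x *\<^sub>R (w /\<^sub>R m)) \<in> L1_space M"
      "L1_norm M (\<lambda>x. indicator A x *\<^sub>R (w /\<^sub>R m)) = 1" if "norm w = 1" for w :: 'b
      using L1_bump[OF A, of w] that unfolding m_def by simp_all
  qed (use u in blast)
qed

theorem proposition4p4:
  fixes M :: "'a measure"
  assumes "complete_measure M"
    and "sigma_finite_measure M"
    and "alt_octahedral (UNIV :: 'b::banach set) norm"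
  shows "alt_octahedral (L1_space M :: ('a \<Rightarrow> 'b) set) (L1_norm M)
       \<and> alt_octahedral (Linf_space M :: ('a \<Rightarrow> 'b) set) (Linf_norm M)"
  using L1_alt_octahedral[OF assms] Linf_alt_octahedral[OF assms(1,3)] by blast

end
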